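(* In the online volunteer notification problem, under the index-based priority scheme and the sparse notification (SN) policy, for every volunteer $v\in[V]$, the expected number of tasks completed by $v$ is at least $J_{v,1}$.
   Context: Online volunteer notification problem. An instance consists of volunteers $[V]$, task types $[S]$, horizon $T$, arrival probabilities $\lambda_{s,t}\ge0$ with $\sum_{s=1}^S\lambda_{s,t}\le1$ (and $\lambda_{0,t}=1-\sum_s\lambda_{s,t}$), match probabilities $p_{v,s}\in[0,1]$, and a probability mass function $g$ on the positive integers with CDF $G(\tau)=\sum_{i\le\tau}g(i)$, $G(0)=0$. In each period $t$ at most one task arrives, of type $s$ with probability $\lambda_{s,t}$, independently across periods. All volunteers start active. Upon an arrival, the platform notifies a subset of volunteers; each notified active volunteer $v$ responds positively independently with probability $p_{v,s}$. A volunteer active and notified at time $t$ becomes inactive (regardless of response) and becomes active again at $t+Z$, $Z\sim g$ independent; inactive volunteers ignore notifications and are unaffected by them. Index-based priority scheme: if several notified active volunteers respond positively to a task, the one with the smallest index completes it. Ex ante solution $\mathbf{x}^*$: let $\mathcal{P}$ be the set of $\mathbf{x}$ with $0\le x_{v,s,t}\le1$ and $\sum_{\tau=1}^t\sum_s\lambda_{s,\tau}x_{v,s,\tau}(1-G(t-\tau))\le1$ for all $v,t$; $f(\mathbf{x})=\sum_{t,s}\lambda_{s,t}(1-\prod_v(1-x_{v,s,t}p_{v,s}))$; $\mathbf{x}^*_{LP}$ maximizes $\sum_{t,s}\lambda_{s,t}\min\{\sum_vx_{v,s,t}p_{v,s},1\}$ over $\mathcal{P}$; $\mathbf{x}^*_{AA}$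 is the output of: $\mathbf{x}^0=\mathbf{0}$, for $i=1..m$ ($m\in\mathbb{N}$) $\mathbf{y}^i\in\arg\max_{\mathbf{x}\in\mathcal{P}}\langle\mathbf{x},\nabla f(\mathbf{x}^{i-1})\rangle$, $\mathbf{x}^i=\mathbf{x}^{i-1}+\mathbf{y}^i/m$, output $\mathbf{x}^m$; $\mathbf{x}^*_{SQ}$ is built for $v=1..V$ in order with $(x^{SQ}_{v,s,t})_{s,t}$ optimal for $\max\sum_{t,s}\lambda_{s,t}\prod_{u<v}(1-p_{u,s}x^{SQ}_{u,s,t})p_{v,s}x_{v,s,t}$ s.t. $0\le x_{v,s,t}\le1$ and $\sum_{\tau\le t}\sum_s\lambda_{s,\tau}x_{v,s,\tau}(1-G(t-\tau))\le1$ for all $t$; $\mathbf{x}^*\in\arg\max_{\mathbf{x}\in\{\mathbf{x}^*_{LP},\mathbf{x}^*_{AA},\mathbf{x}^*_{SQ}\}}f(\mathbf{x})$. SN policy: offline, for $v=1,\dots,V$ in order: $r_{v,s,t}=p_{v,s}\prod_{u=1}^{v-1}(1-\tilde x_{u,s,t}p_{u,s})$; $J_{v,T+1}=0$; for $t=T$ down to $1$: $\tilde x_{v,s,t}=x^*_{v,s,t}\mathbb{I}\{r_{v,s,t}+\sum_{\tau=t+1}^Tg(\tau-t)J_{v,\tau}\ge J_{v,t+1}\}$ for $s\in[S]$ (with $\tilde x_{v,0,t}=r_{v,0,t}=0$), and $J_{v,t}=\sum_{s=0}^S\lambda_{s,t}\big((1-\tilde x_{v,s,t})J_{v,t+1}+\tilde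 x_{v,s,t}(r_{v,s,t}+\sum_{\tau=t+1}^Tg(\tau-t)J_{v,\tau})\big)$. Online: when a task of type $s$ arrives at time $t$, each volunteer $v$ is notified independently with probability $\tilde x_{v,s,t}$. *)

theory Defs
  imports "HOL-Probability.Probability"
begin

(* Conventions:
   volunteers v \<in> {1..V}, task types s \<in> {1..S} (s = 0 means "no arrival"), periods t \<in> {1..T}.
   lam s t = \<lambda>_{s,t};  p v s = p_{v,s};  g :: nat pmf is the return-time distribution
   (a pmf on the positive integers: pmf g 0 = 0).  Vectors x are functions v s t \<mapsto> x_{v,s,t}. *)

type_synonym vec3 = "nat \<Rightarrow> nat \<Rightarrow> nat \<Rightarrow> real"

definition CDF :: "nat pmf \<Rightarrow> nat \<Rightarrow> real" where
  "CDF g \<tau> = (\<Sum>i\<in>{1..\<tau>}. pmf g i)"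

definition polyP :: "nat \<Rightarrow> nat \<Rightarrow> nat \<Rightarrow> (nat \<Rightarrow> nat \<Rightarrow> real) \<Rightarrow> nat pmf \<Rightarrow> vec3 set" where
  "polyP V S T lam g = {x.
     (\<forall>v s t. \<not> (v \<in> {1..V} \<and> s \<in> {1..S} \<and> t \<in> {1..T}) \<longrightarrow> x v s t = 0) \<and>
     (\<forall>v\<in>{1..V}. \<forall>s\<in>{1..S}. \<forall>t\<in>{1..T}. 0 \<le> x v s t \<and> x v s t \<le> 1) \<and>
     (\<forall>v\<in>{1..V}. \<forall>t\<in>{1..T}.
        (\<Sum>\<tau>\<in>{1..t}. \<Sum>s\<in>{1..S}. lam s \<tau> * x v s \<tau> * (1 - CDF g (t - \<tau>))) \<le> 1)}"

definition fobj :: "nat \<Rightarrow> nat \<Rightarrow> nat \<Rightarrow> (nat \<Rightarrow> nat \<Rightarrow> real) \<Rightarrow> (nat \<Rightarrow> nat \<Rightarrow> real) \<Rightarrow> vec3 \<Rightarrow> real" where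
  "fobj V S T lam p x = (\<Sum>t\<in>{1..T}. \<Sum>s\<in>{1..S}.
      lam s t * (1 - (\<Prod>v\<in>{1..V}. 1 - x v s t * p v s)))"

definition grad_fobj :: "nat \<Rightarrow> nat \<Rightarrow> nat \<Rightarrow> (nat \<Rightarrow> nat \<Rightarrow> real) \<Rightarrow> (nat \<Rightarrow> nat \<Rightarrow> real) \<Rightarrow> vec3 \<Rightarrow> vec3" where
  "grad_fobj V S T lam p x = (\<lambda>v s t.
      if v \<in> {1..V} \<and> s \<in> {1..S} \<and> t \<in> {1..T}
      then lam s t * p v s * (\<Prod>u\<in>{1..V} - {v}. 1 - x u s t * p u s) else 0)"

definition inner3 :: "nat \<Rightarrow> nat \<Rightarrow> nat \<Rightarrow> vec3 \<Rightarrow> vec3 \<Rightarrow> real" where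
  "inner3 V S T x y = (\<Sum>v\<in>{1..V}. \<Sum>s\<in>{1..S}. \<Sum>t\<in>{1..T}. x v s t * y v s t)"

definition LPobj :: "nat \<Rightarrow> nat \<Rightarrow> nat \<Rightarrow> (nat \<Rightarrow> nat \<Rightarrow> real) \<Rightarrow> (nat \<Rightarrow> nat \<Rightarrow> real) \<Rightarrow> vec3 \<Rightarrow> real" where
  "LPobj V S T lam p x = (\<Sum>t\<in>{1..T}. \<Sum>s\<in>{1..S}.
      lam s t * min (\<Sum>v\<in>{1..V}. x v s t * p v s) 1)"

definition is_xLP where
  "is_xLP V S T lam p g x \<longleftrightarrow> x \<in> polyP V S T lam g \<and>
     (\<forall>y\<in>polyP V S T lam g. LPobj V S T lam p y \<le> LPobj V S T lam p x)"

definition is_xAA where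
  "is_xAA V S T lam p g x \<longleftrightarrow> (\<exists>(m::nat) > 0. \<exists>X Y :: nat \<Rightarrow> vec3.
     X 0 = (\<lambda>_ _ _. 0) \<and>
     (\<forall>i\<in>{1..m}.
        Y i \<in> polyP V S T lam g \<and>
        (\<forall>y\<in>polyP V S T lam g.
           inner3 V S T y (grad_fobj V S T lam p (X (i - 1)))
             \<le> inner3 V S T (Y i) (grad_fobj V S T lam p (X (i - 1)))) \<and>
        X i = (\<lambda>v s t. X (i - 1) v s t + Y i v s t / real m)) \<and>
     x = X m)"

(* feasible set of the single-volunteer problem in the sequential construction *)
definition polyP1 :: "nat \<Rightarrow> nat \<Rightarrow> (nat \<Rightarrow> nat \<Rightarrow> real) \<Rightarrow> nat pmf \<Rightarrow> (nat \<Rightarrow> nat \<Rightarrow> real) set" where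
  "polyP1 S T lam g = {y.
     (\<forall>s t. \<not> (s \<in> {1..S} \<and> t \<in> {1..T}) \<longrightarrow> y s t = 0) \<and>
     (\<forall>s\<in>{1..S}. \<forall>t\<in>{1..T}. 0 \<le> y s t \<and> y s t \<le> 1) \<and>
     (\<forall>t\<in>{1..T}. (\<Sum>\<tau>\<in>{1..t}. \<Sum>s\<in>{1..S}. lam s \<tau> * y s \<tau> * (1 - CDF g (t - \<tau>))) \<le> 1)}"

definition SQobj :: "nat \<Rightarrow> nat \<Rightarrow> (nat \<Rightarrow> nat \<Rightarrow> real) \<Rightarrow> (nat \<Rightarrow> nat \<Rightarrow> real) \<Rightarrow> vec3 \<Rightarrow> nat \<Rightarrow> (nat \<Rightarrow> nat \<Rightarrow> real) \<Rightarrow> real" where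
  "SQobj S T lam p x v y = (\<Sum>t\<in>{1..T}. \<Sum>s\<in>{1..S}.
      lam s t * (\<Prod>u\<in>{1..<v}. 1 - p u s * x u s t) * p v s * y s t)"

definition is_xSQ where
  "is_xSQ V S T lam p g x \<longleftrightarrow>
     (\<forall>v s t. v \<notin> {1..V} \<longrightarrow> x v s t = 0) \<and>
     (\<forall>v\<in>{1..V}. x v \<in> polyP1 S T lam g \<and>
        (\<forall>y\<in>polyP1 S T lam g. SQobj S T lam p x v y \<le> SQobj S T lam p x v (x v)))"

definition is_ex_ante_solution where
  "is_ex_ante_solution V S T lam p g x \<longleftrightarrow>
     (\<exists>xl xa xq. is_xLP V S T lam p g xl \<and> is_xAA V S T lam p g xa \<and> is_xSQ V S T lam p g xq \<and>
        x \<in> {xl, xa, xq} \<and>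
        (\<forall>y\<in>{xl, xa, xq}. fobj V S T lam p y \<le> fobj V S T lam p x))"

definition SN_cont :: "nat \<Rightarrow> nat pmf \<Rightarrow> (nat \<Rightarrow> real) \<Rightarrow> nat \<Rightarrow> real" where
  "SN_cont T g J t = (\<Sum>\<tau>\<in>{t+1..T}. pmf g (\<tau> - t) * J \<tau>)"

(* thresholded notification probability, given reward r_{v,.,.}, ex ante x*_{v,.,.} and J_{v,.} *)
definition SN_thr :: "nat \<Rightarrow> nat pmf \<Rightarrow> (nat \<Rightarrow> nat \<Rightarrow> real) \<Rightarrow> (nat \<Rightarrow> nat \<Rightarrow> real) \<Rightarrow> (nat \<Rightarrow> real) \<Rightarrow> nat \<Rightarrow> nat \<Rightarrow> real" where
  "SN_thr T g rv xv J s t = xv s t * (if rv s t + SN_cont T g J t \<ge> J (t + 1) then 1 else 0)"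

definition SN_Jstep :: "nat \<Rightarrow> nat \<Rightarrow> (nat \<Rightarrow> nat \<Rightarrow> real) \<Rightarrow> nat pmf \<Rightarrow> (nat \<Rightarrow> nat \<Rightarrow> real) \<Rightarrow> (nat \<Rightarrow> nat \<Rightarrow> real) \<Rightarrow> (nat \<Rightarrow> real) \<Rightarrow> nat \<Rightarrow> real" where
  "SN_Jstep S T lam g rv xv J t =
     (1 - (\<Sum>s\<in>{1..S}. lam s t)) * J (t + 1) +
     (\<Sum>s\<in>{1..S}. lam s t * ((1 - SN_thr T g rv xv J s t) * J (t + 1)
                               + SN_thr T g rv xv J s t * (rv s t + SN_cont T g J t)))"

(* backward induction: after k steps, the values J_T, ..., J_{T-k+1} have been computed;
   all other entries (in particular J_{T+1}) are 0 *)
primrec SN_Jtab :: "nat \<Rightarrow> nat \<Rightarrow> (nat \<Rightarrow> nat \<Rightarrow> real) \<Rightarrow> nat pmf \<Rightarrow> (nat \<Rightarrow> nat \<Rightarrow> real) \<Rightarrow> (nat \<Rightarrow> nat \<Rightarrow> real) \<Rightarrow> nat \<Rightarrow> nat \<Rightarrow> real" where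
  "SN_Jtab S T lam g rv xv 0 = (\<lambda>_. 0)"
| "SN_Jtab S T lam g rv xv (Suc k) =
     (SN_Jtab S T lam g rv xv k)(T - k := SN_Jstep S T lam g rv xv (SN_Jtab S T lam g rv xv k) (T - k))"

definition SN_J :: "nat \<Rightarrow> nat \<Rightarrow> (nat \<Rightarrow> nat \<Rightarrow> real) \<Rightarrow> nat pmf \<Rightarrow> (nat \<Rightarrow> nat \<Rightarrow> real) \<Rightarrow> (nat \<Rightarrow> nat \<Rightarrow> real) \<Rightarrow> nat \<Rightarrow> real" where
  "SN_J S T lam g rv xv = SN_Jtab S T lam g rv xv T"

definition SN_r :: "(nat \<Rightarrow> nat \<Rightarrow> real) \<Rightarrow> vec3 \<Rightarrow> nat \<Rightarrow> nat \<Rightarrow> nat \<Rightarrow> real" where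
  "SN_r p xt v = (\<lambda>s t. p v s * (\<Prod>u\<in>{1..<v}. 1 - xt u s t * p u s))"

definition SN_tilde_v :: "nat \<Rightarrow> nat \<Rightarrow> (nat \<Rightarrow> nat \<Rightarrow> real) \<Rightarrow> nat pmf \<Rightarrow> (nat \<Rightarrow> nat \<Rightarrow> real) \<Rightarrow> (nat \<Rightarrow> nat \<Rightarrow> real) \<Rightarrow> nat \<Rightarrow> nat \<Rightarrow> real" where
  "SN_tilde_v S T lam g rv xv = (\<lambda>s t.
     if s \<in> {1..S} then SN_thr T g rv xv (SN_J S T lam g rv xv) s t else 0)"

(* \<tilde>x for volunteers 1..k (0 for the others) *)
primrec SN_upto :: "nat \<Rightarrow> nat \<Rightarrow> (nat \<Rightarrow> nat \<Rightarrow> real) \<Rightarrow> (nat \<Rightarrow> nat \<Rightarrow> real) \<Rightarrow> nat pmf \<Rightarrow> vec3 \<Rightarrow> nat \<Rightarrow> vec3" where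
  "SN_upto S T lam p g xs 0 = (\<lambda>_ _ _. 0)"
| "SN_upto S T lam p g xs (Suc k) =
     (SN_upto S T lam p g xs k)(Suc k :=
        SN_tilde_v S T lam g (SN_r p (SN_upto S T lam p g xs k) (Suc k)) (xs (Suc k)))"

definition SN_xtilde :: "nat \<Rightarrow> nat \<Rightarrow> nat \<Rightarrow> (nat \<Rightarrow> nat \<Rightarrow> real) \<Rightarrow> (nat \<Rightarrow> nat \<Rightarrow> real) \<Rightarrow> nat pmf \<Rightarrow> vec3 \<Rightarrow> vec3" where
  "SN_xtilde V S T lam p g xs = SN_upto S T lam p g xs V"

definition SN_Jv :: "nat \<Rightarrow> nat \<Rightarrow> (nat \<Rightarrow> nat \<Rightarrow> real) \<Rightarrow> (nat \<Rightarrow> nat \<Rightarrow> real) \<Rightarrow> nat pmf \<Rightarrow> vec3 \<Rightarrow> nat \<Rightarrow> nat \<Rightarrow> real" where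
  "SN_Jv S T lam p g xs v =
     SN_J S T lam g (SN_r p (SN_upto S T lam p g xs (v - 1)) v) (xs v)"

definition arrival :: "nat \<Rightarrow> (nat \<Rightarrow> nat \<Rightarrow> real) \<Rightarrow> nat \<Rightarrow> nat pmf" where
  "arrival S lam t = embed_pmf (\<lambda>s. if s = 0 then 1 - (\<Sum>s'\<in>{1..S}. lam s' t)
                                    else if s \<le> S then lam s t else 0)"

(* State: ret v = period at which v is (again) active; v is active at t iff ret v \<le> t.
   One period t under the randomized notification rule q v s t (notify v w.p. q v s t).
   Result: new state and the volunteer (if any) who completes the task, by the
   index-based priority scheme (smallest index among positive responders). *)
definition period_step :: "nat \<Rightarrow> nat \<Rightarrow> (nat \<Rightarrow> nat \<Rightarrow> real) \<Rightarrow> (nat \<Rightarrow> nat \<Rightarrow> real) \<Rightarrow> nat pmf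
     \<Rightarrow> vec3 \<Rightarrow> nat \<Rightarrow> (nat \<Rightarrow> nat) \<Rightarrow> ((nat \<Rightarrow> nat) \<times> nat option) pmf" where
  "period_step V S lam p g q t ret =
     bind_pmf (arrival S lam t) (\<lambda>s.
       if s = 0 then return_pmf (ret, None) else
       bind_pmf (Pi_pmf {1..V} False (\<lambda>v. bernoulli_pmf (q v s t))) (\<lambda>N.
       bind_pmf (Pi_pmf {1..V} False (\<lambda>v. bernoulli_pmf (p v s))) (\<lambda>R.
       bind_pmf (Pi_pmf {1..V} 0 (\<lambda>v. g)) (\<lambda>Z.
         let C = {v\<in>{1..V}. ret v \<le> t \<and> N v \<and> R v} in
         return_pmf (\<lambda>v. if ret v \<le> t \<and> N v then t + Z v else ret v,
                     if C = {} then None else Some (Min C))))))"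

(* distribution after periods 1..n: (state, number of tasks completed by each volunteer);
   initially all volunteers are active *)
primrec run :: "nat \<Rightarrow> nat \<Rightarrow> (nat \<Rightarrow> nat \<Rightarrow> real) \<Rightarrow> (nat \<Rightarrow> nat \<Rightarrow> real) \<Rightarrow> nat pmf
     \<Rightarrow> vec3 \<Rightarrow> nat \<Rightarrow> ((nat \<Rightarrow> nat) \<times> (nat \<Rightarrow> nat)) pmf" where
  "run V S lam p g q 0 = return_pmf (\<lambda>_. 0, \<lambda>_. 0)"
| "run V S lam p g q (Suc n) =
     bind_pmf (run V S lam p g q n) (\<lambda>(ret, cnt).
       map_pmf (\<lambda>(ret', c). (ret', case c of None \<Rightarrow> cnt | Some u \<Rightarrow> cnt(u := Suc (cnt u))))
               (period_step V S lam p g q (Suc n) ret))"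

definition expected_completed :: "nat \<Rightarrow> nat \<Rightarrow> nat \<Rightarrow> (nat \<Rightarrow> nat \<Rightarrow> real) \<Rightarrow> (nat \<Rightarrow> nat \<Rightarrow> real)
     \<Rightarrow> nat pmf \<Rightarrow> vec3 \<Rightarrow> nat \<Rightarrow> real" where
  "expected_completed V S T lam p g q v =
     measure_pmf.expectation (run V S lam p g q T) (\<lambda>(ret, cnt). real (cnt v))"

end

theory Submission
  imports Defs
begin

text \<open>Fix the volunteer \<open>v\<close> and let \<open>J\<close> be its table \<open>J\<^sub>v\<^sub>,\<^sub>t\<close> computed offline. When \<open>v\<close> is
  notified of a type-\<open>s\<close> task at time \<open>t\<close>, the recursion for \<open>J\<close> credits it with the completion
  probability \<open>r\<^sub>v\<^sub>,\<^sub>s\<^sub>,\<^sub>t\<close> of the situation in which all volunteers of higher priority are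
  active; in the real process inactive ones can only raise this probability. Hence the potential
  "tasks completed by \<open>v\<close> so far plus \<open>J\<close> at the first period in which \<open>v\<close> can again be
  notified" does not decrease in expectation from one period to the next. It equals \<open>J\<^sub>v\<^sub>,\<^sub>1\<close>
  at the start and the number of tasks completed by \<open>v\<close> after period \<open>T\<close>.\<close>

section \<open>Expectations over probability mass functions\<close>

lemma integrable_measure_pmf_bounded:
  fixes f :: "'a \<Rightarrow> real"
  assumes "\<And>x. x \<in> set_pmf M \<Longrightarrow> \<bar>f x\<bar> \<le> B"
  shows "integrable (measure_pmf M) f"
  by (rule measure_pmf.integrable_const_bound[where B=B]) (auto simp: AE_measure_pmf_iff assms)

lemma abs_expectation_le:
  fixes f :: "'a \<Rightarrow> real"
  assumes "\<And>x. x \<in> set_pmf M \<Longrightarrow> \<bar>f x\<bar> \<le> B"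
  shows "\<bar>measure_pmf.expectation M f\<bar> \<le> B"
proof -
  have "\<bar>measure_pmf.expectation M f\<bar> \<le> measure_pmf.expectation M (\<lambda>x. \<bar>f x\<bar>)"
    using integral_norm_bound[of M f] by simp
  also have "\<dots> \<le> B"
    using assms by (intro measure_pmf.integral_le_const integrable_measure_pmf_bounded[where B=B])
      (auto simp: AE_measure_pmf_iff)
  finally show ?thesis .
qed

text \<open>Only boundedness on the support is required: clamping the integrand reduces this to
  \<open>integral_bind\<close>.\<close>
lemma expectation_bind_pmf:
  fixes f :: "'b \<Rightarrow> real"
  assumes bounded: "\<And>y. y \<in> set_pmf (bind_pmf M N) \<Longrightarrow> \<bar>f y\<bar> \<le> B"
  shows "measure_pmf.expectation (bind_pmf M N) f
       = measure_pmf.expectation M (\<lambda>x. measure_pmf.expectation (N x) f)"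
proof -
  define f' where "f' y = max (- \<bar>B\<bar>) (min \<bar>B\<bar> (f y))" for y
  have f'_eq: "f' y = f y" if "y \<in> set_pmf (bind_pmf M N)" for y
    using bounded[OF that] by (auto simp: f'_def)
  have "measure_pmf.expectation (bind_pmf M N) f = measure_pmf.expectation (bind_pmf M N) f'"
    by (intro integral_cong_AE AE_pmfI) (auto simp: f'_eq)
  also have "\<dots> = measure_pmf.expectation M (\<lambda>x. measure_pmf.expectation (N x) f')"
    unfolding measure_pmf_bind
    by (rule integral_bind[where K="count_space UNIV" and B="\<bar>B\<bar>" and B'=1])
      (auto simp: f'_def measure_pmf_in_subprob_algebra)
  also have "\<dots> = measure_pmf.expectation M (\<lambda>x. measure_pmf.expectation (N x) f)"
    by (intro integral_cong_AE AE_pmfI) (auto intro!: f'_eq)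
  finally show ?thesis .
qed

lemma expectation_bind_pmf_bounded:
  fixes f :: "'b \<Rightarrow> real"
  assumes "\<And>y. \<bar>f y\<bar> \<le> B"
  shows "measure_pmf.expectation (bind_pmf M N) f
       = measure_pmf.expectation M (\<lambda>x. measure_pmf.expectation (N x) f)"
  using assms by (rule expectation_bind_pmf)

lemma expectation_bind_pmf_ge:
  fixes f h :: "'b \<Rightarrow> real"
  assumes f_bounded: "\<And>y. y \<in> set_pmf (bind_pmf M N) \<Longrightarrow> \<bar>f y\<bar> \<le> B"
    and h_bounded: "\<And>x. x \<in> set_pmf M \<Longrightarrow> \<bar>h x\<bar> \<le> C"
    and h_le: "\<And>x. x \<in> set_pmf M \<Longrightarrow> h x \<le> measure_pmf.expectation (N x) f"
  shows "measure_pmf.expectation M h \<le> measure_pmf.expectation (bind_pmf M N) f"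
proof -
  have "measure_pmf.expectation M h \<le> measure_pmf.expectation M (\<lambda>x. measure_pmf.expectation (N x) f)"
  proof (rule integral_mono_AE)
    show "integrable M h"
      using h_bounded by (rule integrable_measure_pmf_bounded)
    show "integrable M (\<lambda>x. measure_pmf.expectation (N x) f)"
      using f_bounded by (intro integrable_measure_pmf_bounded abs_expectation_le) auto
  qed (simp add: AE_measure_pmf_iff h_le)
  also have "\<dots> = measure_pmf.expectation (bind_pmf M N) f"
    using f_bounded by (rule expectation_bind_pmf[symmetric])
  finally show ?thesis .
qed

lemma expectation_Pi_pmf_component:
  fixes h :: "'b \<Rightarrow> real"
  assumes "finite A" "x \<in> A"
  shows "measure_pmf.expectation (Pi_pmf A dflt P) (\<lambda>f. h (f x)) = measure_pmf.expectation (P x) h"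
proof -
  have "measure_pmf.expectation (Pi_pmf A dflt P) (\<lambda>f. h (f x))
      = measure_pmf.expectation (map_pmf (\<lambda>f. f x) (Pi_pmf A dflt P)) h"
    by simp
  also have "map_pmf (\<lambda>f. f x) (Pi_pmf A dflt P) = P x"
    by (subst Pi_pmf_component[OF assms(1)]) (simp add: assms(2))
  finally show ?thesis .
qed

section \<open>One period of the notification process\<close>

lemma pmf_arrival:
  assumes "\<And>s. s \<in> {1..S} \<Longrightarrow> 0 \<le> lam s t" "(\<Sum>s\<in>{1..S}. lam s t) \<le> 1"
  shows "pmf (arrival S lam t) s
       = (if s = 0 then 1 - (\<Sum>s'\<in>{1..S}. lam s' t) else if s \<le> S then lam s t else 0)"
  unfolding arrival_def
proof (rule pmf_embed_pmf)
  let ?f = "\<lambda>s. if s = 0 then 1 - (\<Sum>s'\<in>{1..S}. lam s' t) else if s \<le> S then lam s t else 0"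
  show "0 \<le> ?f s" for s
    using assms by auto
  have "(\<integral>\<^sup>+ s. ennreal (?f s) \<partial>count_space UNIV) = (\<Sum>s\<in>{0..S}. ennreal (?f s))"
    by (rule nn_integral_count_space') auto
  also have "\<dots> = ennreal (?f 0 + (\<Sum>s\<in>{1..S}. ?f s))"
    using assms by (subst sum_ennreal) (auto simp: sum.atLeast_Suc_atMost)
  also have "(\<Sum>s\<in>{1..S}. ?f s) = (\<Sum>s\<in>{1..S}. lam s t)"
    by (rule sum.cong) auto
  finally show "(\<integral>\<^sup>+ s. ennreal (?f s) \<partial>count_space UNIV) = 1"
    by simp
qed

lemma expectation_arrival:
  fixes h :: "nat \<Rightarrow> real"
  assumes "\<And>s. s \<in> {1..S} \<Longrightarrow> 0 \<le> lam s t" "(\<Sum>s\<in>{1..S}. lam s t) \<le> 1"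
  shows "measure_pmf.expectation (arrival S lam t) h
       = (1 - (\<Sum>s\<in>{1..S}. lam s t)) * h 0 + (\<Sum>s\<in>{1..S}. lam s t * h s)"
proof -
  have pmf_eq: "pmf (arrival S lam t) s
      = (if s = 0 then 1 - (\<Sum>s'\<in>{1..S}. lam s' t) else if s \<le> S then lam s t else 0)" for s
    by (rule pmf_arrival) (use assms in auto)
  have "measure_pmf.expectation (arrival S lam t) h = (\<Sum>s\<in>{0..S}. h s * pmf (arrival S lam t) s)"
    by (rule integral_measure_pmf_real) (auto simp: pmf_eq set_pmf_eq split: if_splits)
  also have "\<dots> = h 0 * pmf (arrival S lam t) 0 + (\<Sum>s\<in>{1..S}. h s * pmf (arrival S lam t) s)"
    by (simp add: sum.atLeast_Suc_atMost)
  also have "(\<Sum>s\<in>{1..S}. h s * pmf (arrival S lam t) s) = (\<Sum>s\<in>{1..S}. lam s t * h s)"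
    by (rule sum.cong) (auto simp: pmf_eq)
  finally show ?thesis
    by (simp add: pmf_eq)
qed

lemma expectation_return_time:
  fixes J :: "nat \<Rightarrow> real"
  assumes g_pos: "pmf g 0 = 0" and J_beyond: "\<And>\<tau>. T < \<tau> \<Longrightarrow> J \<tau> = 0"
  shows "measure_pmf.expectation g (\<lambda>z. J (max (t + z) (Suc t))) = SN_cont T g J t"
proof -
  have "measure_pmf.expectation g (\<lambda>z. J (max (t + z) (Suc t)))
      = (\<Sum>z\<in>{1..T-t}. J (max (t + z) (Suc t)) * pmf g z)"
  proof (rule integral_measure_pmf_real)
    fix z assume z: "z \<in> set_pmf g" "J (max (t + z) (Suc t)) \<noteq> 0"
    then have "z \<noteq> 0"
      using g_pos by (metis set_pmf_iff)
    moreover have "max (t + z) (Suc t) \<le> T"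
      using z(2) J_beyond by (meson not_le)
    ultimately show "z \<in> {1..T-t}"
      by auto
  qed auto
  also have "\<dots> = (\<Sum>z\<in>{1..T-t}. pmf g (z + t - t) * J (z + t))"
    by (rule sum.cong) (auto simp: max_def add.commute)
  also have "\<dots> = (\<Sum>\<tau>\<in>{1+t..(T-t)+t}. pmf g (\<tau> - t) * J \<tau>)"
    by (rule sum.shift_bounds_cl_nat_ivl[symmetric])
  also have "{1+t..(T-t)+t} = {t+1..T}"
    by auto
  finally show ?thesis
    by (simp add: SN_cont_def)
qed

definition first_responder :: "nat set \<Rightarrow> nat option" where
  "first_responder C = (if C = {} then None else Some (Min C))"

lemma first_responder_in: "finite C \<Longrightarrow> first_responder C = Some v \<Longrightarrow> v \<in> C"
  unfolding first_responder_def by (metis Min_in option.distinct(1) option.inject)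

definition task_step :: "nat \<Rightarrow> (nat \<Rightarrow> nat \<Rightarrow> real) \<Rightarrow> nat pmf \<Rightarrow> vec3 \<Rightarrow> nat \<Rightarrow> nat
     \<Rightarrow> (nat \<Rightarrow> nat) \<Rightarrow> ((nat \<Rightarrow> nat) \<times> nat option) pmf" where
  "task_step V p g q s t ret =
     bind_pmf (Pi_pmf {1..V} False (\<lambda>u. bernoulli_pmf (q u s t))) (\<lambda>N.
     bind_pmf (Pi_pmf {1..V} False (\<lambda>u. bernoulli_pmf (p u s))) (\<lambda>R.
     bind_pmf (Pi_pmf {1..V} 0 (\<lambda>u. g)) (\<lambda>Z.
       return_pmf (\<lambda>u. if ret u \<le> t \<and> N u then t + Z u else ret u,
                   first_responder {u\<in>{1..V}. ret u \<le> t \<and> N u \<and> R u}))))"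

lemma period_step_eq_task_step:
  "period_step V S lam p g q t ret =
     bind_pmf (arrival S lam t) (\<lambda>s. if s = 0 then return_pmf (ret, None) else task_step V p g q s t ret)"
  unfolding period_step_def task_step_def first_responder_def Let_def ..

lemma period_step_inactive:
  assumes "x \<in> set_pmf (period_step V S lam p g q t ret)" "t < ret w"
  shows "fst x w = ret w \<and> snd x \<noteq> Some w"
  using assms
  by (auto simp: period_step_eq_task_step task_step_def split: if_splits dest!: first_responder_in[rotated])

lemma prod_first_success:
  fixes c :: "'a::comm_monoid_mult" and v :: nat
  assumes "v \<in> {1..V}"
  shows "(\<Prod>u\<in>{1..V}. if u < v then d u else if u = v then c else 1) = c * (\<Prod>u\<in>{1..<v}. d u)"
proof -
  let ?m = "\<lambda>u. if u < v then d u else if u = v then c else 1"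
  have "(\<Prod>u\<in>{1..V}. ?m u) = (\<Prod>u\<in>{1..<Suc v}. ?m u)"
    by (rule prod.mono_neutral_right) (use assms in auto)
  also have "\<dots> = (\<Prod>u\<in>{1..<v}. ?m u) * c"
    using assms by (subst prod.atLeastLessThan_Suc) auto
  finally show ?thesis
    by (simp add: mult.commute)
qed

text \<open>With independent notifications and responses, the event that volunteer \<open>v\<close> responds while
  every volunteer of smaller index fails to respond is a product event, and it implies that \<open>v\<close>
  is the first responder.\<close>
lemma expectation_first_responder_ge:
  fixes a b :: "nat \<Rightarrow> real"
  assumes a01: "\<And>u. u \<in> {1..V} \<Longrightarrow> 0 \<le> a u \<and> a u \<le> 1"
    and b01: "\<And>u. u \<in> {1..V} \<Longrightarrow> 0 \<le> b u \<and> b u \<le> 1"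
    and v: "v \<in> A" and A: "A \<subseteq> {1..V}"
  shows "a v * b v * (\<Prod>u\<in>{1..<v}. 1 - a u * b u)
    \<le> measure_pmf.expectation (Pi_pmf {1..V} False (\<lambda>u. bernoulli_pmf (a u))) (\<lambda>N.
         measure_pmf.expectation (Pi_pmf {1..V} False (\<lambda>u. bernoulli_pmf (b u))) (\<lambda>R.
           of_bool (first_responder {u \<in> A. N u \<and> R u} = Some v)))"
    (is "_ \<le> measure_pmf.expectation ?N (\<lambda>N. measure_pmf.expectation ?R (\<lambda>R. ?win N R))")
proof -
  define h :: "nat \<Rightarrow> bool \<Rightarrow> bool \<Rightarrow> real" where
    "h u x y = (if u < v then of_bool (\<not> (x \<and> y)) else if u = v then of_bool (x \<and> y) else 1)"
    for u x y
  define k where "k u x = measure_pmf.expectation (bernoulli_pmf (b u)) (h u x)" for u x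
  have v_range: "v \<in> {1..V}"
    using v A by auto
  have h01: "0 \<le> h u x y \<and> h u x y \<le> 1" for u x y
    by (auto simp: h_def)
  have k01: "0 \<le> k u x \<and> k u x \<le> 1" if "u \<in> {1..V}" for u x
    using b01[OF that] by (auto simp: k_def h_def)
  have win_ge: "(\<Prod>u\<in>{1..V}. h u (N u) (R u)) \<le> ?win N R" for N R
  proof (cases "N v \<and> R v \<and> (\<forall>u\<in>{1..<v}. \<not> (N u \<and> R u))")
    case True
    let ?C = "{u \<in> A. N u \<and> R u}"
    have "?C \<subseteq> {1..V}"
      using A by blast
    then have "finite ?C"
      by (rule finite_subset) simp
    moreover have "v \<le> u" if "u \<in> ?C" for u
      using True that A by (metis atLeastAtMost_iff atLeastLessThan_iff mem_Collect_eq not_le subsetD)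
    moreover have "v \<in> ?C"
      using True v by simp
    ultimately have "Min ?C = v"
      by (rule Min_eqI)
    then have "?win N R = 1"
      using \<open>v \<in> ?C\<close> by (auto simp: first_responder_def)
    then show ?thesis
      using h01 by (simp add: prod_le_1)
  next
    case False
    then consider "\<not> (N v \<and> R v)" | u where "u \<in> {1..<v}" "N u \<and> R u"
      by blast
    then have "\<exists>u\<in>{1..V}. h u (N u) (R u) = 0"
      using v_range by cases (force simp: h_def)+
    then have "(\<Prod>u\<in>{1..V}. h u (N u) (R u)) = 0"
      by (simp add: prod_zero_iff)
    then show ?thesis
      by (metis zero_less_eq_of_bool)
  qed
  have Ek: "measure_pmf.expectation (bernoulli_pmf (a u)) (k u)
      = (if u < v then 1 - a u * b u else if u = v then a v * b v else 1)" if "u \<in> {1..V}" for u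
    using a01[OF that] b01[OF that] by (simp add: k_def h_def algebra_simps)
  have "a v * b v * (\<Prod>u\<in>{1..<v}. 1 - a u * b u)
      = (\<Prod>u\<in>{1..V}. if u < v then 1 - a u * b u else if u = v then a v * b v else 1)"
    by (rule prod_first_success[OF v_range, symmetric])
  also have "\<dots> = (\<Prod>u\<in>{1..V}. measure_pmf.expectation (bernoulli_pmf (a u)) (k u))"
    by (rule prod.cong) (simp_all add: Ek)
  also have "\<dots> = measure_pmf.expectation ?N (\<lambda>N. \<Prod>u\<in>{1..V}. k u (N u))"
    by (rule expectation_prod_Pi_pmf[symmetric])
      (use k01 in \<open>auto intro: integrable_measure_pmf_bounded[where B=1]\<close>)
  also have "\<dots> \<le> measure_pmf.expectation ?N (\<lambda>N. measure_pmf.expectation ?R (?win N))"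
  proof (rule integral_mono)
    show "integrable ?N (\<lambda>N. \<Prod>u\<in>{1..V}. k u (N u))"
      by (rule integrable_measure_pmf_bounded[where B=1]) (use k01 in \<open>auto simp: abs_prod intro!: prod_le_1\<close>)
    show "integrable ?N (\<lambda>N. measure_pmf.expectation ?R (?win N))"
      by (rule integrable_measure_pmf_bounded[where B=1], rule abs_expectation_le) simp
    fix N
    have "(\<Prod>u\<in>{1..V}. k u (N u)) = measure_pmf.expectation ?R (\<lambda>R. \<Prod>u\<in>{1..V}. h u (N u) (R u))"
      unfolding k_def
      by (rule expectation_prod_Pi_pmf[symmetric])
        (use h01 in \<open>auto intro: integrable_measure_pmf_bounded[where B=1]\<close>)
    also have "\<dots> \<le> measure_pmf.expectation ?R (?win N)"
    proof (rule integral_mono[OF _ _ win_ge])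
      show "integrable ?R (\<lambda>R. \<Prod>u\<in>{1..V}. h u (N u) (R u))"
        by (rule integrable_measure_pmf_bounded[where B=1]) (use h01 in \<open>auto simp: abs_prod intro!: prod_le_1\<close>)
      show "integrable ?R (?win N)"
        by (rule integrable_measure_pmf_bounded[where B=1]) simp
    qed
    finally show "(\<Prod>u\<in>{1..V}. k u (N u)) \<le> measure_pmf.expectation ?R (?win N)" .
  qed
  finally show ?thesis .
qed

lemma expectation_task_step_completion:
  assumes p01: "\<And>u. u \<in> {1..V} \<Longrightarrow> 0 \<le> p u s \<and> p u s \<le> 1"
    and q01: "\<And>u. u \<in> {1..V} \<Longrightarrow> 0 \<le> q u s t \<and> q u s t \<le> 1"
    and v: "v \<in> {1..V}" and active: "ret v \<le> t"
  shows "q v s t * SN_r p q v s t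
       \<le> measure_pmf.expectation (task_step V p g q s t ret) (\<lambda>x. of_bool (snd x = Some v))"
proof -
  have "q v s t * SN_r p q v s t = q v s t * p v s * (\<Prod>u\<in>{1..<v}. 1 - q u s t * p u s)"
    by (simp add: SN_r_def)
  also have "\<dots> \<le> measure_pmf.expectation (Pi_pmf {1..V} False (\<lambda>u. bernoulli_pmf (q u s t))) (\<lambda>N.
         measure_pmf.expectation (Pi_pmf {1..V} False (\<lambda>u. bernoulli_pmf (p u s))) (\<lambda>R.
           of_bool (first_responder {u \<in> {u \<in> {1..V}. ret u \<le> t}. N u \<and> R u} = Some v)))"
    by (rule expectation_first_responder_ge) (use p01 q01 v active in auto)
  also have "\<dots> = measure_pmf.expectation (task_step V p g q s t ret) (\<lambda>x. of_bool (snd x = Some v))"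
    unfolding task_step_def by (simp add: expectation_bind_pmf_bounded[where B=1] conj_assoc)
  finally show ?thesis .
qed

lemma expectation_task_step_continuation:
  fixes J :: "nat \<Rightarrow> real"
  assumes q01: "0 \<le> q v s t" "q v s t \<le> 1" and g_pos: "pmf g 0 = 0"
    and J_beyond: "\<And>\<tau>. T < \<tau> \<Longrightarrow> J \<tau> = 0" and J_bounded: "\<And>\<tau>. \<bar>J \<tau>\<bar> \<le> B"
    and v: "v \<in> {1..V}" and active: "ret v \<le> t"
  shows "measure_pmf.expectation (task_step V p g q s t ret) (\<lambda>x. J (max (fst x v) (Suc t)))
       = (1 - q v s t) * J (Suc t) + q v s t * SN_cont T g J t"
proof -
  define \<beta> where "\<beta> b = measure_pmf.expectation g (\<lambda>z. J (max (if b then t + z else ret v) (Suc t)))"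
    for b
  have return_time: "measure_pmf.expectation (Pi_pmf {1..V} 0 (\<lambda>u. g))
      (\<lambda>Z. J (max (if b then t + Z v else ret v) (Suc t))) = \<beta> b" for b
    unfolding \<beta>_def by (rule expectation_Pi_pmf_component) (use v in auto)
  have "measure_pmf.expectation (task_step V p g q s t ret) (\<lambda>x. J (max (fst x v) (Suc t)))
      = measure_pmf.expectation (Pi_pmf {1..V} False (\<lambda>u. bernoulli_pmf (q u s t))) (\<lambda>N.
          measure_pmf.expectation (Pi_pmf {1..V} 0 (\<lambda>u. g))
            (\<lambda>Z. J (max (if N v then t + Z v else ret v) (Suc t))))"
    unfolding task_step_def
    using active by (simp add: expectation_bind_pmf_bounded[where B=B] J_bounded)
  also have "\<dots> = measure_pmf.expectation (Pi_pmf {1..V} False (\<lambda>u. bernoulli_pmf (q u s t)))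
      (\<lambda>N. \<beta> (N v))"
    by (rule Bochner_Integration.integral_cong[OF refl return_time])
  also have "\<dots> = measure_pmf.expectation (bernoulli_pmf (q v s t)) \<beta>"
    by (rule expectation_Pi_pmf_component) (use v in auto)
  also have "\<dots> = (1 - q v s t) * J (Suc t) + q v s t * SN_cont T g J t"
    using q01 active
    by (simp add: \<beta>_def max_absorb2 expectation_return_time[where J=J, OF g_pos J_beyond])
  finally show ?thesis .
qed

section \<open>The potential argument\<close>

text \<open>The right-hand side of the recursion for \<open>J\<^sub>v\<^sub>,\<^sub>t\<close> as a function of the notification
  probabilities \<open>x\<close> and rewards \<open>r\<close> of \<open>v\<close>; \<open>SN_Jstep\<close> is its instance at the thresholded \<open>x\<close>.\<close>
definition value_step :: "nat \<Rightarrow> nat \<Rightarrow> (nat \<Rightarrow> nat \<Rightarrow> real) \<Rightarrow> nat pmf \<Rightarrow> (nat \<Rightarrow> nat \<Rightarrow> real)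
     \<Rightarrow> (nat \<Rightarrow> nat \<Rightarrow> real) \<Rightarrow> (nat \<Rightarrow> real) \<Rightarrow> nat \<Rightarrow> real" where
  "value_step S T lam g r x J t =
     (1 - (\<Sum>s\<in>{1..S}. lam s t)) * J (t + 1) +
     (\<Sum>s\<in>{1..S}. lam s t * ((1 - x s t) * J (t + 1) + x s t * (r s t + SN_cont T g J t)))"

lemma expectation_period_step_active:
  fixes J :: "nat \<Rightarrow> real"
  assumes lam_nonneg: "\<And>s. s \<in> {1..S} \<Longrightarrow> 0 \<le> lam s t"
    and lam_sum: "(\<Sum>s\<in>{1..S}. lam s t) \<le> 1"
    and p01: "\<And>u s. u \<in> {1..V} \<Longrightarrow> s \<in> {1..S} \<Longrightarrow> 0 \<le> p u s \<and> p u s \<le> 1"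
    and q01: "\<And>u s. 0 \<le> q u s t \<and> q u s t \<le> 1"
    and g_pos: "pmf g 0 = 0"
    and J_beyond: "\<And>\<tau>. T < \<tau> \<Longrightarrow> J \<tau> = 0" and J_bounded: "\<And>\<tau>. \<bar>J \<tau>\<bar> \<le> B"
    and v: "v \<in> {1..V}" and active: "ret v \<le> t"
  shows "value_step S T lam g (SN_r p q v) (q v) J t
       \<le> measure_pmf.expectation (period_step V S lam p g q t ret)
           (\<lambda>x. of_bool (snd x = Some v) + J (max (fst x v) (Suc t)))"
proof -
  define f where "f x = of_bool (snd x = Some v) + J (max (fst x v) (Suc t))"
    for x :: "(nat \<Rightarrow> nat) \<times> nat option"
  have f_bounded: "\<bar>f x\<bar> \<le> 1 + B" for x
    using J_bounded[of "max (fst x v) (Suc t)"] by (simp add: f_def abs_le_iff)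
  have task: "(1 - q v s t) * J (t + 1) + q v s t * (SN_r p q v s t + SN_cont T g J t)
      \<le> measure_pmf.expectation (task_step V p g q s t ret) f" if s: "s \<in> {1..S}" for s
  proof -
    have "(1 - q v s t) * J (t + 1) + q v s t * (SN_r p q v s t + SN_cont T g J t)
        = q v s t * SN_r p q v s t
          + measure_pmf.expectation (task_step V p g q s t ret) (\<lambda>x. J (max (fst x v) (Suc t)))"
      by (subst expectation_task_step_continuation[where B=B])
        (use q01 g_pos J_beyond J_bounded v active in \<open>auto simp: algebra_simps\<close>)
    also have "\<dots> \<le> measure_pmf.expectation (task_step V p g q s t ret) (\<lambda>x. of_bool (snd x = Some v))
          + measure_pmf.expectation (task_step V p g q s t ret) (\<lambda>x. J (max (fst x v) (Suc t)))"
      using expectation_task_step_completion[of V p s q t v ret g] p01 q01 s v active by simp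
    also have "\<dots> = measure_pmf.expectation (task_step V p g q s t ret) f"
      unfolding f_def
      by (rule Bochner_Integration.integral_add[symmetric])
        (auto intro: integrable_measure_pmf_bounded[where B=1] integrable_measure_pmf_bounded J_bounded)
    finally show ?thesis .
  qed
  have "measure_pmf.expectation (period_step V S lam p g q t ret) f
      = measure_pmf.expectation (arrival S lam t) (\<lambda>s. measure_pmf.expectation
          (if s = 0 then return_pmf (ret, None) else task_step V p g q s t ret) f)"
    unfolding period_step_eq_task_step by (rule expectation_bind_pmf_bounded[OF f_bounded])
  also have "\<dots> = (1 - (\<Sum>s\<in>{1..S}. lam s t)) * J (t + 1)
      + (\<Sum>s\<in>{1..S}. lam s t * measure_pmf.expectation (task_step V p g q s t ret) f)"
    by (subst expectation_arrival) (use lam_nonneg lam_sum active in \<open>auto simp: f_def max_absorb2\<close>)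
  finally show ?thesis
    unfolding value_step_def f_def[symmetric]
    using task lam_nonneg by (auto intro!: sum_mono mult_left_mono)
qed

lemma expectation_period_step_inactive:
  fixes J :: "nat \<Rightarrow> real"
  assumes "t < ret v"
  shows "measure_pmf.expectation (period_step V S lam p g q t ret)
           (\<lambda>x. of_bool (snd x = Some v) + J (max (fst x v) (Suc t))) = J (ret v)"
proof -
  have "measure_pmf.expectation (period_step V S lam p g q t ret)
           (\<lambda>x. of_bool (snd x = Some v) + J (max (fst x v) (Suc t)))
      = measure_pmf.expectation (period_step V S lam p g q t ret) (\<lambda>_. J (ret v))"
    using assms period_step_inactive[where w=v]
    by (intro integral_cong_AE AE_pmfI) (auto simp: max_absorb1)
  then show ?thesis
    by simp
qed

lemma expectation_period_step_ge:
  fixes J :: "nat \<Rightarrow> real"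
  assumes lam_nonneg: "\<And>s. s \<in> {1..S} \<Longrightarrow> 0 \<le> lam s t"
    and lam_sum: "(\<Sum>s\<in>{1..S}. lam s t) \<le> 1"
    and p01: "\<And>u s. u \<in> {1..V} \<Longrightarrow> s \<in> {1..S} \<Longrightarrow> 0 \<le> p u s \<and> p u s \<le> 1"
    and q01: "\<And>u s. 0 \<le> q u s t \<and> q u s t \<le> 1"
    and g_pos: "pmf g 0 = 0"
    and J_beyond: "\<And>\<tau>. T < \<tau> \<Longrightarrow> J \<tau> = 0" and J_bounded: "\<And>\<tau>. \<bar>J \<tau>\<bar> \<le> B"
    and J_le: "J t \<le> value_step S T lam g (SN_r p q v) (q v) J t"
    and v: "v \<in> {1..V}"
  shows "J (max (ret v) t)
       \<le> measure_pmf.expectation (period_step V S lam p g q t ret)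
           (\<lambda>x. of_bool (snd x = Some v) + J (max (fst x v) (Suc t)))"
proof (cases "ret v \<le> t")
  case True
  have "J t \<le> value_step S T lam g (SN_r p q v) (q v) J t"
    by (rule J_le)
  also have "\<dots> \<le> measure_pmf.expectation (period_step V S lam p g q t ret)
      (\<lambda>x. of_bool (snd x = Some v) + J (max (fst x v) (Suc t)))"
    by (rule expectation_period_step_active[where B=B]) (use assms True in auto)
  finally show ?thesis
    using True by (simp add: max_absorb2)
next
  case False
  then show ?thesis
    using expectation_period_step_inactive[of t ret v] by simp
qed

lemma run_count_le: "x \<in> set_pmf (run V S lam p g q n) \<Longrightarrow> snd x v \<le> n"
proof (induction n arbitrary: x)
  case 0
  then show ?case
    by simp
next
  case (Suc n)
  then obtain ret cnt c where "(ret, cnt) \<in> set_pmf (run V S lam p g q n)"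
    and "snd x = (case c of None \<Rightarrow> cnt | Some u \<Rightarrow> cnt(u := Suc (cnt u)))"
    by (auto split: prod.splits)
  then show ?case
    using Suc.IH by (fastforce split: option.splits)
qed

lemma expectation_run_potential:
  fixes J :: "nat \<Rightarrow> real"
  assumes lam_nonneg: "\<And>s t. s \<in> {1..S} \<Longrightarrow> t \<in> {1..T} \<Longrightarrow> 0 \<le> lam s t"
    and lam_sum: "\<And>t. t \<in> {1..T} \<Longrightarrow> (\<Sum>s\<in>{1..S}. lam s t) \<le> 1"
    and p01: "\<And>u s. u \<in> {1..V} \<Longrightarrow> s \<in> {1..S} \<Longrightarrow> 0 \<le> p u s \<and> p u s \<le> 1"
    and q01: "\<And>u s t. t \<in> {1..T} \<Longrightarrow> 0 \<le> q u s t \<and> q u s t \<le> 1"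
    and g_pos: "pmf g 0 = 0"
    and J_beyond: "\<And>\<tau>. T < \<tau> \<Longrightarrow> J \<tau> = 0" and J_bounded: "\<And>\<tau>. \<bar>J \<tau>\<bar> \<le> B"
    and J_le: "\<And>t. t \<in> {1..T} \<Longrightarrow> J t \<le> value_step S T lam g (SN_r p q v) (q v) J t"
    and v: "v \<in> {1..V}"
  shows "n \<le> T \<Longrightarrow> J 1 \<le> measure_pmf.expectation (run V S lam p g q n)
                                (\<lambda>(ret, cnt). real (cnt v) + J (max (ret v) (Suc n)))"
proof (induction n)
  case 0
  then show ?case
    by simp
next
  case (Suc n)
  define \<Phi> where "\<Phi> m = (\<lambda>(ret, cnt). real (cnt v) + J (max (ret v) (Suc m)))" for m
  define f where "f x = of_bool (snd x = Some v) + J (max (fst x v) (Suc (Suc n)))"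
    for x :: "(nat \<Rightarrow> nat) \<times> nat option"
  have t: "Suc n \<in> {1..T}"
    using Suc.prems by simp
  have \<Phi>_bounded: "\<bar>\<Phi> m y\<bar> \<le> real m + B" if "y \<in> set_pmf (run V S lam p g q m)" for m y
    using run_count_le[OF that, of v] J_bounded[of "max (fst y v) (Suc m)"]
    by (auto simp: \<Phi>_def split: prod.splits)
  have f_bounded: "\<bar>f x\<bar> \<le> 1 + B" for x
    using J_bounded[of "max (fst x v) (Suc (Suc n))"] by (simp add: f_def abs_le_iff)
  then have f_integrable: "integrable (period_step V S lam p g q (Suc n) ret) f" for ret
    by (intro integrable_measure_pmf_bounded)
  have "\<Phi> n (ret, cnt) \<le> measure_pmf.expectation
          (map_pmf (\<lambda>(ret', c). (ret', case c of None \<Rightarrow> cnt | Some u \<Rightarrow> cnt(u := Suc (cnt u))))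
             (period_step V S lam p g q (Suc n) ret)) (\<Phi> (Suc n))" for ret cnt
  proof -
    have "J (max (ret v) (Suc n)) \<le> measure_pmf.expectation (period_step V S lam p g q (Suc n) ret) f"
      unfolding f_def
      by (rule expectation_period_step_ge[where B=B])
        (use lam_nonneg[OF _ t] lam_sum[OF t] p01 q01[OF t] g_pos J_beyond J_bounded J_le[OF t] v in auto)
    also have "real (cnt v) + \<dots> = measure_pmf.expectation (period_step V S lam p g q (Suc n) ret)
                                    (\<lambda>x. real (cnt v) + f x)"
      using f_integrable by (simp add: Bochner_Integration.integral_add)
    also have "\<dots> = measure_pmf.expectation
          (map_pmf (\<lambda>(ret', c). (ret', case c of None \<Rightarrow> cnt | Some u \<Rightarrow> cnt(u := Suc (cnt u))))
             (period_step V S lam p g q (Suc n) ret)) (\<Phi> (Suc n))"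
      by (auto simp: \<Phi>_def f_def intro!: Bochner_Integration.integral_cong split: option.splits)
    finally show ?thesis
      by (simp add: \<Phi>_def)
  qed
  then have "measure_pmf.expectation (run V S lam p g q n) (\<Phi> n)
      \<le> measure_pmf.expectation (run V S lam p g q (Suc n)) (\<Phi> (Suc n))"
    unfolding run.simps(2)
    by (intro expectation_bind_pmf_ge[where B="real (Suc n) + B" and C="real n + B"] \<Phi>_bounded)
      (auto simp flip: run.simps(2))
  then show ?case
    using Suc by (simp add: \<Phi>_def)
qed

lemma expected_completed_ge_value:
  fixes J :: "nat \<Rightarrow> real"
  assumes lam_nonneg: "\<And>s t. s \<in> {1..S} \<Longrightarrow> t \<in> {1..T} \<Longrightarrow> 0 \<le> lam s t"
    and lam_sum: "\<And>t. t \<in> {1..T} \<Longrightarrow> (\<Sum>s\<in>{1..S}. lam s t) \<le> 1"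
    and p01: "\<And>u s. u \<in> {1..V} \<Longrightarrow> s \<in> {1..S} \<Longrightarrow> 0 \<le> p u s \<and> p u s \<le> 1"
    and q01: "\<And>u s t. t \<in> {1..T} \<Longrightarrow> 0 \<le> q u s t \<and> q u s t \<le> 1"
    and g_pos: "pmf g 0 = 0"
    and J_beyond: "\<And>\<tau>. T < \<tau> \<Longrightarrow> J \<tau> = 0"
    and J_le: "\<And>t. t \<in> {1..T} \<Longrightarrow> J t \<le> value_step S T lam g (SN_r p q v) (q v) J t"
    and v: "v \<in> {1..V}"
  shows "J 1 \<le> expected_completed V S T lam p g q v"
proof -
  define B where "B = (\<Sum>\<tau>\<le>T. \<bar>J \<tau>\<bar>)"
  have J_bounded: "\<bar>J \<tau>\<bar> \<le> B" for \<tau>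
  proof (cases "\<tau> \<le> T")
    case True
    then show ?thesis
      unfolding B_def by (intro member_le_sum) auto
  next
    case False
    then show ?thesis
      using J_beyond[of \<tau>] by (simp add: B_def sum_nonneg)
  qed
  have "J 1 \<le> measure_pmf.expectation (run V S lam p g q T)
                (\<lambda>(ret, cnt). real (cnt v) + J (max (ret v) (Suc T)))"
    by (rule expectation_run_potential[where B=B and n=T and T=T]) (use assms J_bounded in auto)
  also have "\<dots> = expected_completed V S T lam p g q v"
    unfolding expected_completed_def
    by (intro Bochner_Integration.integral_cong) (auto simp: J_beyond split: prod.splits)
  finally show ?thesis .
qed

section \<open>The SN policy and the ex ante solution\<close>

lemma SN_Jtab_beyond: "k \<le> T \<Longrightarrow> T < \<tau> \<Longrightarrow> SN_Jtab S T lam g r x k \<tau> = 0"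
  by (induction k) auto

lemma SN_Jtab_stable: "T - k < \<tau> \<Longrightarrow> SN_Jtab S T lam g r x (k + d) \<tau> = SN_Jtab S T lam g r x k \<tau>"
  by (induction d) auto

lemma SN_Jtab_eq_SN_J: "k \<le> T \<Longrightarrow> T - k < \<tau> \<Longrightarrow> SN_Jtab S T lam g r x k \<tau> = SN_J S T lam g r x \<tau>"
  using SN_Jtab_stable[of T k \<tau> S lam g r x "T - k"] by (simp add: SN_J_def)

lemma SN_J_beyond: "T < \<tau> \<Longrightarrow> SN_J S T lam g r x \<tau> = 0"
  unfolding SN_J_def by (rule SN_Jtab_beyond) auto

lemma SN_Jstep_cong:
  assumes "\<And>\<tau>. t < \<tau> \<Longrightarrow> J \<tau> = J' \<tau>"
  shows "SN_Jstep S T lam g r x J t = SN_Jstep S T lam g r x J' t"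
proof -
  have "SN_cont T g J t = SN_cont T g J' t"
    unfolding SN_cont_def by (rule sum.cong) (auto simp: assms)
  then show ?thesis
    by (simp add: SN_Jstep_def SN_thr_def assms)
qed

lemma SN_J_rec:
  assumes t: "t \<in> {1..T}"
  shows "SN_J S T lam g r x t = SN_Jstep S T lam g r x (SN_J S T lam g r x) t"
proof -
  define k where "k = T - t"
  have k: "Suc k \<le> T" "T - k = t"
    using t by (auto simp: k_def)
  have "SN_J S T lam g r x t = SN_Jtab S T lam g r x (Suc k) t"
    by (rule SN_Jtab_eq_SN_J[symmetric]) (use k in auto)
  also have "\<dots> = SN_Jstep S T lam g r x (SN_Jtab S T lam g r x k) t"
    using k by simp
  also have "\<dots> = SN_Jstep S T lam g r x (SN_J S T lam g r x) t"
    using k by (intro SN_Jstep_cong SN_Jtab_eq_SN_J) auto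
  finally show ?thesis .
qed

lemma SN_J_value_step:
  assumes "t \<in> {1..T}"
  shows "SN_J S T lam g r x t = value_step S T lam g r (SN_tilde_v S T lam g r x) (SN_J S T lam g r x) t"
  unfolding SN_J_rec[OF assms] SN_Jstep_def value_step_def SN_tilde_v_def
  by (intro arg_cong2[where f="(+)"] refl sum.cong) auto

lemma SN_upto_stable: "u \<le> k \<Longrightarrow> SN_upto S T lam p g xs (k + d) u = SN_upto S T lam p g xs k u"
  by (induction d) auto

lemma SN_upto_bounds:
  assumes xs01: "\<And>u s. u \<in> {1..V} \<Longrightarrow> s \<in> {1..S} \<Longrightarrow> 0 \<le> xs u s t \<and> xs u s t \<le> 1"
    and "k \<le> V"
  shows "0 \<le> SN_upto S T lam p g xs k u s t \<and> SN_upto S T lam p g xs k u s t \<le> 1"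
  using assms(2)
proof (induction k arbitrary: u)
  case 0
  then show ?case
    by simp
next
  case (Suc k)
  then show ?case
    using xs01[of "Suc k" s] by (auto simp: SN_tilde_v_def SN_thr_def)
qed

lemma SN_xtilde_eq_SN_upto:
  "u \<le> k \<Longrightarrow> k \<le> V \<Longrightarrow> SN_xtilde V S T lam p g xs u = SN_upto S T lam p g xs k u"
  using SN_upto_stable[of u k S T lam p g xs "V - k"] by (simp add: SN_xtilde_def)

lemma SN_r_cong: "(\<And>u. u \<in> {1..<v} \<Longrightarrow> x u = y u) \<Longrightarrow> SN_r p x v = SN_r p y v"
  unfolding SN_r_def by (metis (no_types, lifting) prod.cong)

lemma SN_r_SN_upto:
  "v \<le> V \<Longrightarrow> SN_r p (SN_upto S T lam p g xs (v - 1)) v = SN_r p (SN_xtilde V S T lam p g xs) v"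
  by (rule SN_r_cong, rule SN_xtilde_eq_SN_upto[symmetric]) auto

lemma SN_xtilde_volunteer:
  assumes "v \<in> {1..V}"
  shows "SN_xtilde V S T lam p g xs v
       = SN_tilde_v S T lam g (SN_r p (SN_xtilde V S T lam p g xs) v) (xs v)"
proof -
  obtain k where k: "v = Suc k"
    using assms by (cases v) auto
  have "SN_xtilde V S T lam p g xs v = SN_upto S T lam p g xs (Suc k) v"
    using assms k by (intro SN_xtilde_eq_SN_upto) auto
  then show ?thesis
    using assms k SN_r_SN_upto[of v V p S T lam g xs] by simp
qed

lemma SN_Jv_eq_SN_J:
  assumes "v \<le> V"
  shows "SN_Jv S T lam p g xs v = SN_J S T lam g (SN_r p (SN_xtilde V S T lam p g xs) v) (xs v)"
  unfolding SN_Jv_def SN_r_SN_upto[OF assms] ..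

lemma is_xAA_bounds:
  assumes "is_xAA V S T lam p g x" "u \<in> {1..V}" "s \<in> {1..S}" "t \<in> {1..T}"
  shows "0 \<le> x u s t \<and> x u s t \<le> 1"
proof -
  obtain m :: nat and X Y where m: "0 < m" and X0: "X 0 = (\<lambda>_ _ _. 0)"
    and step: "\<And>i. i \<in> {1..m} \<Longrightarrow> Y i \<in> polyP V S T lam g \<and>
                  X i = (\<lambda>v s t. X (i - 1) v s t + Y i v s t / real m)"
    and x: "x = X m"
    using assms(1) unfolding is_xAA_def by blast
  have "0 \<le> X i u s t \<and> X i u s t \<le> real i / real m" if "i \<le> m" for i
    using that
  proof (induction i)
    case 0
    then show ?case
      by (simp add: X0)
  next
    case (Suc i)
    have "0 \<le> Y (Suc i) u s t \<and> Y (Suc i) u s t \<le> 1"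
      using step[of "Suc i"] Suc.prems assms(2-4) by (auto simp: polyP_def)
    then have "0 \<le> Y (Suc i) u s t / real m \<and> Y (Suc i) u s t / real m \<le> 1 / real m"
      using m by (simp add: divide_right_mono)
    then show ?case
      using Suc step[of "Suc i"] by (auto simp: add_divide_distrib)
  qed
  from this[of m] show ?thesis
    using m by (simp add: x)
qed

lemma is_ex_ante_solution_bounds:
  assumes "is_ex_ante_solution V S T lam p g x" "u \<in> {1..V}" "s \<in> {1..S}" "t \<in> {1..T}"
  shows "0 \<le> x u s t \<and> x u s t \<le> 1"
proof -
  obtain xl xa xq where "is_xLP V S T lam p g xl" "is_xAA V S T lam p g xa" "is_xSQ V S T lam p g xq"
    and "x \<in> {xl, xa, xq}"
    using assms(1) unfolding is_ex_ante_solution_def by blast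
  then show ?thesis
    using is_xAA_bounds[of V S T lam p g xa u s t] assms(2-4)
    by (auto simp: is_xLP_def polyP_def is_xSQ_def polyP1_def)
qed

theorem lemma2:
  fixes V S T :: nat
    and lam :: "nat \<Rightarrow> nat \<Rightarrow> real"
    and p :: "nat \<Rightarrow> nat \<Rightarrow> real"
    and g :: "nat pmf"
    and xs :: "nat \<Rightarrow> nat \<Rightarrow> nat \<Rightarrow> real"
    and v :: nat
  assumes lam_nonneg: "\<And>s t. s \<in> {1..S} \<Longrightarrow> t \<in> {1..T} \<Longrightarrow> lam s t \<ge> 0"
    and lam_sum: "\<And>t. t \<in> {1..T} \<Longrightarrow> (\<Sum>s\<in>{1..S}. lam s t) \<le> 1"
    and p_prob: "\<And>u s. u \<in> {1..V} \<Longrightarrow> s \<in> {1..S} \<Longrightarrow> 0 \<le> p u s \<and> p u s \<le> 1"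
    and g_pos: "pmf g 0 = 0"
    and xs_sol: "is_ex_ante_solution V S T lam p g xs"
    and v: "v \<in> {1..V}"
  shows "expected_completed V S T lam p g (SN_xtilde V S T lam p g xs) v
           \<ge> SN_Jv S T lam p g xs v 1"
proof -
  define q where "q = SN_xtilde V S T lam p g xs"
  define J where "J = SN_J S T lam g (SN_r p q v) (xs v)"
  have q01: "0 \<le> q u s t \<and> q u s t \<le> 1" if "t \<in> {1..T}" for u s t
    unfolding q_def SN_xtilde_def
    by (rule SN_upto_bounds[where V=V]) (use is_ex_ante_solution_bounds[OF xs_sol] that in auto)
  have "J t \<le> value_step S T lam g (SN_r p q v) (q v) J t" if "t \<in> {1..T}" for t
    using SN_J_value_step[OF that] SN_xtilde_volunteer[OF v] by (simp add: J_def q_def)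
  then have "J 1 \<le> expected_completed V S T lam p g q v"
    by (intro expected_completed_ge_value)
      (use lam_nonneg lam_sum p_prob q01 g_pos v SN_J_beyond in \<open>auto simp: J_def\<close>)
  then show ?thesis
    using SN_Jv_eq_SN_J[of v V S T lam p g xs] v by (simp add: J_def q_def)
qed

end
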